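(* Let $M$ be a compact translating soliton in $\mathbb{H}^2\times\mathbb{R}$ with boundary $\Gamma=\partial M$. If $\Gamma$ lies in the region between two vertical planes, then the whole soliton $M$ lies between those planes.
   Context: $\mathbb{H}^2\times\mathbb{R}$ carries the product metric $\langle\cdot,\cdot\rangle$ of the hyperbolic plane of curvature $-1$ and the real line; $\partial_z$ is the unit vertical field. A vertical plane is a surface $\gamma\times\mathbb{R}$ with $\gamma\subset\mathbb{H}^2$ a complete geodesic; "$\Gamma$ lies between two vertical planes $P_1,P_2$" means that for each $i$, $\Gamma$ is contained in one closed half-space determined by $P_i$, namely the one containing the other plane. An oriented immersed surface $M$ with unit normal $\eta$ and mean curvature $H_M$ (half the trace of the second fundamental form with respect to $\eta$) is a translating soliton if $H_M=\langle\eta,\partial_z\rangle$. *)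

theory Defs
  imports "HOL-Analysis.Analysis"
begin

text \<open>Model: H^2 x R realised as the upper half-space {(x,y,z). y > 0} with metric
  (dx^2 + dy^2)/y^2 + dz^2.  Points and tangent vectors are triples (x, y, z).\<close>

type_synonym pt = "real \<times> real \<times> real"

definition cx :: "pt \<Rightarrow> real" where "cx p = fst p"
definition cy :: "pt \<Rightarrow> real" where "cy p = fst (snd p)"
definition cz :: "pt \<Rightarrow> real" where "cz p = snd (snd p)"

definition HxR :: "pt set" where "HxR = {p. cy p > 0}"

definition hinner :: "pt \<Rightarrow> pt \<Rightarrow> pt \<Rightarrow> real" where
  "hinner p a b = (cx a * cx b + cy a * cy b) / (cy p)^2 + cz a * cz b"

text \<open>Christoffel symbols: Gamma_p(a,b) with (nabla_X Y)^k = dY^k(X) + Gamma^k_ij X^i Y^j.\<close>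
definition chris :: "pt \<Rightarrow> pt \<Rightarrow> pt \<Rightarrow> pt" where
  "chris p a b = ( - (cx a * cy b + cy a * cx b) / cy p,
                   (cx a * cx b - cy a * cy b) / cy p,
                   0)"

definition vert_field :: pt where "vert_field = (0, 0, 1)"

definition pd1 :: "(real \<times> real \<Rightarrow> 'b::real_normed_vector) \<Rightarrow> real \<times> real \<Rightarrow> 'b" where
  "pd1 F q = frechet_derivative F (at q) (1, 0)"
definition pd2 :: "(real \<times> real \<Rightarrow> 'b::real_normed_vector) \<Rightarrow> real \<times> real \<Rightarrow> 'b" where
  "pd2 F q = frechet_derivative F (at q) (0, 1)"

definition C2_on :: "(real \<times> real) set \<Rightarrow> (real \<times> real \<Rightarrow> pt) \<Rightarrow> bool" where
  "C2_on U F \<longleftrightarrow> open U \<and>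
     (\<forall>q\<in>U. F differentiable (at q) \<and> pd1 F differentiable (at q) \<and> pd2 F differentiable (at q)) \<and>
     continuous_on U (pd1 (pd1 F)) \<and> continuous_on U (pd2 (pd1 F)) \<and>
     continuous_on U (pd1 (pd2 F)) \<and> continuous_on U (pd2 (pd2 F))"

definition immersion_on :: "(real \<times> real) set \<Rightarrow> (real \<times> real \<Rightarrow> pt) \<Rightarrow> bool" where
  "immersion_on U F \<longleftrightarrow> (\<forall>q\<in>U. pd1 F q \<noteq> 0 \<and> (\<forall>c. pd2 F q \<noteq> c *\<^sub>R pd1 F q))"

definition closed_upper :: "(real \<times> real) set" where
  "closed_upper = {q. snd q \<ge> 0}"

definition surface_chart ::
  "'a topology \<Rightarrow> ('a \<Rightarrow> pt) \<Rightarrow> (real \<times> real) set \<Rightarrow> (real \<times> real \<Rightarrow> 'a) \<Rightarrow> (real \<times> real \<Rightarrow> pt) \<Rightarrow> bool"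
  where
  "surface_chart T f U \<psi> F \<longleftrightarrow>
     open U \<and> openin T (\<psi> ` (U \<inter> closed_upper)) \<and>
     homeomorphic_map (subtopology euclidean (U \<inter> closed_upper))
                      (subtopology T (\<psi> ` (U \<inter> closed_upper))) \<psi> \<and>
     C2_on U F \<and> immersion_on U F \<and> F ` U \<subseteq> HxR \<and>
     (\<forall>q\<in>U \<inter> closed_upper. F q = f (\<psi> q))"

definition compact_immersed_surface :: "'a topology \<Rightarrow> ('a \<Rightarrow> pt) \<Rightarrow> bool" where
  "compact_immersed_surface T f \<longleftrightarrow>
     compact_space T \<and> Hausdorff_space T \<and>
     (\<forall>x\<in>topspace T. \<exists>U \<psi> F. surface_chart T f U \<psi> F \<and> x \<in> \<psi> ` (U \<inter> closed_upper))"

definition surface_boundary :: "'a topology \<Rightarrow> ('a \<Rightarrow> pt) \<Rightarrow> 'a set" where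
  "surface_boundary T f =
     {x. \<exists>U \<psi> F q. surface_chart T f U \<psi> F \<and> q \<in> U \<and> snd q = 0 \<and> \<psi> q = x}"

text \<open>Mean curvature (half the trace of II w.r.t. the normal n, II(X,Y) = <nabla_X Y, n>)
  of the parametrisation F at q.\<close>
definition mean_curv :: "(real \<times> real \<Rightarrow> pt) \<Rightarrow> pt \<Rightarrow> real \<times> real \<Rightarrow> real" where
  "mean_curv F n q =
     (let p = F q; Xu = pd1 F q; Xv = pd2 F q;
          E = hinner p Xu Xu; Fm = hinner p Xu Xv; G = hinner p Xv Xv;
          e = hinner p (pd1 (pd1 F) q + chris p Xu Xu) n;
          f = hinner p (pd2 (pd1 F) q + chris p Xu Xv) n;
          g = hinner p (pd2 (pd2 F) q + chris p Xv Xv) n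
      in (e * G - 2 * f * Fm + g * E) / (2 * (E * G - Fm^2)))"

definition unit_normal :: "'a topology \<Rightarrow> ('a \<Rightarrow> pt) \<Rightarrow> ('a \<Rightarrow> pt) \<Rightarrow> bool" where
  "unit_normal T f \<eta> \<longleftrightarrow> continuous_map T euclidean \<eta> \<and>
     (\<forall>U \<psi> F. surface_chart T f U \<psi> F \<longrightarrow>
        (\<forall>q\<in>U \<inter> closed_upper.
           hinner (F q) (\<eta> (\<psi> q)) (pd1 F q) = 0 \<and>
           hinner (F q) (\<eta> (\<psi> q)) (pd2 F q) = 0 \<and>
           hinner (F q) (\<eta> (\<psi> q)) (\<eta> (\<psi> q)) = 1))"

definition translating_soliton :: "'a topology \<Rightarrow> ('a \<Rightarrow> pt) \<Rightarrow> ('a \<Rightarrow> pt) \<Rightarrow> bool" where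
  "translating_soliton T f \<eta> \<longleftrightarrow>
     compact_immersed_surface T f \<and> unit_normal T f \<eta> \<and>
     (\<forall>U \<psi> F. surface_chart T f U \<psi> F \<longrightarrow>
        (\<forall>q\<in>U. snd q > 0 \<longrightarrow>
           mean_curv F (\<eta> (\<psi> q)) q = hinner (F q) (\<eta> (\<psi> q)) vert_field))"

definition vline :: "real \<Rightarrow> (real \<times> real) set" where
  "vline c = {(x, y). x = c \<and> y > 0}"
definition hcirc :: "real \<Rightarrow> real \<Rightarrow> (real \<times> real) set" where
  "hcirc c r = {(x, y). (x - c)^2 + y^2 = r^2 \<and> y > 0}"

definition closed_halfplane :: "(real \<times> real) set \<Rightarrow> (real \<times> real) set \<Rightarrow> bool" where
  "closed_halfplane \<gamma> S \<longleftrightarrow>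
     (\<exists>c. \<gamma> = vline c \<and>
        (S = {(x, y). x \<le> c \<and> y > 0} \<or> S = {(x, y). x \<ge> c \<and> y > 0})) \<or>
     (\<exists>c r. r > 0 \<and> \<gamma> = hcirc c r \<and>
        (S = {(x, y). (x - c)^2 + y^2 \<le> r^2 \<and> y > 0} \<or>
         S = {(x, y). (x - c)^2 + y^2 \<ge> r^2 \<and> y > 0}))"

definition proj_H2 :: "pt \<Rightarrow> real \<times> real" where
  "proj_H2 p = (cx p, cy p)"

end

theory Submission
  imports Defs
begin

text \<open>
  A closed half-plane of \<open>H\<^sup>2\<close> bounded by a geodesic is \<open>{w \<le> 0}\<close> for
  \<open>w(x, y) = (A (x\<^sup>2 + y\<^sup>2) + B x + C) / y\<close>, a positive multiple of the hyperbolic sine of the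
  signed distance to the geodesic; its level curves are the equidistant curves.  If \<open>w \<circ> f\<close>, which
  is \<open>\<le> 0\<close> on the boundary, had a positive maximum, it would be attained at an interior point, where
  the surface is tangent to the vertical cylinder over a level curve.  There the unit normal is
  horizontal, so the soliton equation \<open>H = \<langle>\<eta>, \<partial>\<^sub>z\<rangle>\<close> says \<open>H = 0\<close>.  But the Hessian of
  \<open>w \<circ> f\<close> is negative semidefinite, and on the tangent plane it is a multiple of the second
  fundamental form plus the Hessian of \<open>w\<close> along its level curve, which is positive where
  \<open>w > 0\<close>.  Tracing against the metric, the first part gives the vanishing mean curvature and the
  second a positive number, a contradiction.
\<close>

section \<open>Second-order conditions at a local maximum\<close>

lemma has_real_derivative_along_line:
  fixes f :: "'a::real_normed_vector \<Rightarrow> real"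
  assumes "(f has_derivative f') (at (q + t *\<^sub>R d))"
  shows "((\<lambda>t. f (q + t *\<^sub>R d)) has_real_derivative f' d) (at t)"
proof -
  interpret f': bounded_linear f' using assms by (rule has_derivative_bounded_linear)
  have "((\<lambda>t. q + t *\<^sub>R d) has_derivative (\<lambda>s. s *\<^sub>R d)) (at t)"
    by (auto intro!: derivative_eq_intros)
  from has_derivative_compose[OF this assms] show ?thesis
    by (simp add: has_field_derivative_def f'.scale mult_commute_abs)
qed

lemma second_difference_mean_value:
  fixes g :: "'a::real_normed_vector \<Rightarrow> real"
  assumes dg: "\<And>q. q \<in> ball q0 r \<Longrightarrow> (g has_derivative g' q) (at q)"
    and "0 < h" "h * (norm u + norm v) < r"
  obtains \<xi> where "0 < \<xi>" "\<xi> < h"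
    "g (q0 + h *\<^sub>R u + h *\<^sub>R v) - g (q0 + h *\<^sub>R u) - g (q0 + h *\<^sub>R v) + g q0
       = h * (g' (q0 + h *\<^sub>R v + \<xi> *\<^sub>R u) u - g' (q0 + \<xi> *\<^sub>R u) u)"
proof -
  define \<phi> where "\<phi> s = g (q0 + h *\<^sub>R v + s *\<^sub>R u) - g (q0 + s *\<^sub>R u)" for s
  define \<phi>' where "\<phi>' s = g' (q0 + h *\<^sub>R v + s *\<^sub>R u) u - g' (q0 + s *\<^sub>R u) u" for s
  have "(\<phi> has_real_derivative \<phi>' s) (at s)" if "0 \<le> s" "s \<le> h" for s
  proof -
    have "norm (h *\<^sub>R v + s *\<^sub>R u) \<le> h * (norm u + norm v)" "norm (s *\<^sub>R u) \<le> h * (norm u + norm v)"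
    proof -
      have "s * norm u \<le> h * norm u" "0 \<le> h * norm v" "norm (s *\<^sub>R u) = s * norm u"
        "norm (h *\<^sub>R v + s *\<^sub>R u) \<le> h * norm v + s * norm u"
        using that \<open>0 < h\<close> norm_triangle_ineq[of "h *\<^sub>R v" "s *\<^sub>R u"] by (simp_all add: mult_right_mono)
      then show "norm (h *\<^sub>R v + s *\<^sub>R u) \<le> h * (norm u + norm v)" "norm (s *\<^sub>R u) \<le> h * (norm u + norm v)"
        unfolding distrib_left by linarith+
    qed
    moreover have "q0 + x \<in> ball q0 r" if "norm x < r" for x
      using that by (simp add: dist_norm)
    ultimately have "q0 + (h *\<^sub>R v + s *\<^sub>R u) \<in> ball q0 r" "q0 + s *\<^sub>R u \<in> ball q0 r"
      using assms(3) by fastforce+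
    then have "(g has_derivative g' (q0 + h *\<^sub>R v + s *\<^sub>R u)) (at (q0 + h *\<^sub>R v + s *\<^sub>R u))"
      "(g has_derivative g' (q0 + s *\<^sub>R u)) (at (q0 + s *\<^sub>R u))"
      by (simp_all add: dg add.assoc)
    from DERIV_diff[OF this[THEN has_real_derivative_along_line]] show ?thesis
      unfolding \<phi>_def \<phi>'_def .
  qed
  then obtain \<xi> where "0 < \<xi>" "\<xi> < h" "\<phi> h - \<phi> 0 = (h - 0) * \<phi>' \<xi>"
    using MVT2[of 0 h \<phi> \<phi>'] \<open>0 < h\<close> by force
  then show thesis
    by (intro that[of \<xi>]) (simp_all add: \<phi>_def \<phi>'_def algebra_simps)
qed

lemma second_difference_approx:
  fixes g :: "'a::real_normed_vector \<Rightarrow> real"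
  assumes "e > 0" "r > 0"
    and dg: "\<And>q. q \<in> ball q0 r \<Longrightarrow> (g has_derivative g' q) (at q)"
    and dgu: "((\<lambda>q. g' q u) has_derivative D) (at q0)"
  shows "\<forall>\<^sub>F h in at_right 0. \<bar>g (q0 + h *\<^sub>R u + h *\<^sub>R v) - g (q0 + h *\<^sub>R u) - g (q0 + h *\<^sub>R v) + g q0
           - h\<^sup>2 * D v\<bar> \<le> e * h\<^sup>2"
proof -
  interpret D: bounded_linear D using dgu by (rule has_derivative_bounded_linear)
  define K where "K = 2 * norm u + norm v + 1"
  have "K > 0" by (simp add: K_def add_nonneg_pos)
  obtain \<delta> where "\<delta> > 0" and \<delta>: "\<And>q. norm (q - q0) < \<delta> \<Longrightarrow>
      norm (g' q u - g' q0 u - D (q - q0)) \<le> (e / K) * norm (q - q0)"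
    using dgu \<open>e > 0\<close> \<open>K > 0\<close> unfolding has_derivative_at_alt by (meson divide_pos_pos)
  have "\<bar>g (q0 + h *\<^sub>R u + h *\<^sub>R v) - g (q0 + h *\<^sub>R u) - g (q0 + h *\<^sub>R v) + g q0 - h\<^sup>2 * D v\<bar> \<le> e * h\<^sup>2"
    if "0 < h" "h < min \<delta> r / K" for h
  proof -
    have hK: "h * K < \<delta>" "h * K < r" using that \<open>K > 0\<close> by (simp_all add: pos_less_divide_eq)
    have "h * (norm u + norm v) \<le> h * K" "h * norm u \<le> h * K"
      using \<open>0 < h\<close> by (simp_all add: K_def)
    then have "h * (norm u + norm v) < r" using hK by linarith
    then obtain \<xi> where \<xi>: "0 < \<xi>" "\<xi> < h" and mvt:
      "g (q0 + h *\<^sub>R u + h *\<^sub>R v) - g (q0 + h *\<^sub>R u) - g (q0 + h *\<^sub>R v) + g q0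
         = h * (g' (q0 + h *\<^sub>R v + \<xi> *\<^sub>R u) u - g' (q0 + \<xi> *\<^sub>R u) u)"
      using second_difference_mean_value[OF dg \<open>0 < h\<close>] by blast
    have "\<xi> * norm u \<le> h * norm u" "norm (h *\<^sub>R v + \<xi> *\<^sub>R u) \<le> h * norm v + \<xi> * norm u"
      using \<xi> \<open>0 < h\<close> norm_triangle_ineq[of "h *\<^sub>R v" "\<xi> *\<^sub>R u"] by (simp_all add: mult_right_mono)
    then have near: "norm (h *\<^sub>R v + \<xi> *\<^sub>R u) \<le> h * (norm u + norm v)" "norm (\<xi> *\<^sub>R u) \<le> h * norm u"
      using \<xi> unfolding distrib_left by simp_all
    define R where "R q = g' q u - g' q0 u - D (q - q0)" for q
    have R: "\<bar>R (q0 + x)\<bar> \<le> (e / K) * b" if "norm x \<le> b" "b \<le> h * K" for x b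
    proof -
      have "\<bar>R (q0 + x)\<bar> \<le> (e / K) * norm x"
        using \<delta>[of "q0 + x"] that hK by (simp add: R_def)
      also have "\<dots> \<le> (e / K) * b"
        using that \<open>e > 0\<close> \<open>K > 0\<close> by (intro mult_left_mono) simp_all
      finally show ?thesis .
    qed
    have "\<bar>R (q0 + h *\<^sub>R v + \<xi> *\<^sub>R u)\<bar> \<le> (e / K) * (h * (norm u + norm v))"
      "\<bar>R (q0 + \<xi> *\<^sub>R u)\<bar> \<le> (e / K) * (h * norm u)"
      using R[OF near(1)] R[OF near(2)] \<open>h * (norm u + norm v) \<le> h * K\<close> \<open>h * norm u \<le> h * K\<close>
      by (simp_all add: add.assoc)
    moreover have "(e / K) * (h * (norm u + norm v)) + (e / K) * (h * norm u) \<le> e * h"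
    proof -
      have "h * (norm u + norm v) + h * norm u \<le> h * K"
        using \<open>0 < h\<close> by (simp add: K_def algebra_simps)
      then have "(e / K) * (h * (norm u + norm v) + h * norm u) \<le> (e / K) * (h * K)"
        using \<open>e > 0\<close> \<open>K > 0\<close> by (intro mult_left_mono) simp_all
      also have "\<dots> = e * h" using \<open>K > 0\<close> by simp
      finally show ?thesis by (simp only: distrib_left)
    qed
    moreover have "g' (q0 + h *\<^sub>R v + \<xi> *\<^sub>R u) u - g' (q0 + \<xi> *\<^sub>R u) u - h * D v
        = R (q0 + h *\<^sub>R v + \<xi> *\<^sub>R u) - R (q0 + \<xi> *\<^sub>R u)"
      by (simp add: R_def D.add D.scale)
    ultimately have "\<bar>g' (q0 + h *\<^sub>R v + \<xi> *\<^sub>R u) u - g' (q0 + \<xi> *\<^sub>R u) u - h * D v\<bar> \<le> e * h"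
      by linarith
    moreover have "g (q0 + h *\<^sub>R u + h *\<^sub>R v) - g (q0 + h *\<^sub>R u) - g (q0 + h *\<^sub>R v) + g q0 - h\<^sup>2 * D v
        = h * (g' (q0 + h *\<^sub>R v + \<xi> *\<^sub>R u) u - g' (q0 + \<xi> *\<^sub>R u) u - h * D v)"
      unfolding mvt by (simp add: power2_eq_square right_diff_distrib)
    ultimately show ?thesis
      using \<open>0 < h\<close> by (simp add: abs_mult power2_eq_square mult_left_mono)
  qed
  moreover have "min \<delta> r / K > 0" using \<open>\<delta> > 0\<close> \<open>r > 0\<close> \<open>K > 0\<close> by simp
  ultimately show ?thesis
    unfolding eventually_at_right_field by blast
qed

lemma DERIV_local_max_second_nonpos:
  fixes h h' :: "real \<Rightarrow> real"
  assumes "r > 0"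
    and dh: "\<And>t. \<bar>t\<bar> < r \<Longrightarrow> (h has_real_derivative h' t) (at t)"
    and dh': "(h' has_real_derivative c) (at 0)"
    and max: "\<And>t. \<bar>t\<bar> < r \<Longrightarrow> h t \<le> h 0"
  shows "c \<le> 0"
proof (rule ccontr)
  assume "\<not> c \<le> 0"
  then obtain d where "d > 0" and inc: "\<And>t. 0 < t \<Longrightarrow> t < d \<Longrightarrow> h' 0 < h' t"
    using DERIV_pos_inc_right[OF dh'] by auto
  have "h' 0 = 0"
    by (rule DERIV_local_max[OF dh[of 0] \<open>r > 0\<close>]) (use \<open>r > 0\<close> max in auto)
  define t where "t = min d r / 2"
  have t: "0 < t" "t < d" "t < r" using \<open>d > 0\<close> \<open>r > 0\<close> by (auto simp: t_def)
  obtain \<xi> where \<xi>: "0 < \<xi>" "\<xi> < t" "h t - h 0 = (t - 0) * h' \<xi>"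
    using MVT2[of 0 t h h'] dh t by force
  have "h' \<xi> > 0" using inc[of \<xi>] \<xi> t \<open>h' 0 = 0\<close> by simp
  then have "h t > h 0" using \<xi> t by (simp add: algebra_simps)
  with max[of t] t show False by simp
qed

text \<open>Young's form of Schwarz's theorem: the partial derivatives need only be differentiable at
  \<open>q0\<close>.\<close>

lemma mixed_derivatives_symmetric:
  fixes g :: "'a::real_normed_vector \<Rightarrow> real"
  assumes "r > 0"
    and dg: "\<And>q. q \<in> ball q0 r \<Longrightarrow> (g has_derivative g' q) (at q)"
    and dgu: "((\<lambda>q. g' q u) has_derivative Du) (at q0)"
    and dgv: "((\<lambda>q. g' q v) has_derivative Dv) (at q0)"
  shows "Du v = Dv u"
proof (rule ccontr)
  assume "Du v \<noteq> Dv u"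
  define e where "e = \<bar>Du v - Dv u\<bar> / 3"
  have "e > 0" using \<open>Du v \<noteq> Dv u\<close> by (simp add: e_def)
  define \<Delta> where "\<Delta> h = g (q0 + h *\<^sub>R u + h *\<^sub>R v) - g (q0 + h *\<^sub>R u) - g (q0 + h *\<^sub>R v) + g q0" for h
  have "\<forall>\<^sub>F h in at_right 0. 0 < h \<and> \<bar>\<Delta> h - h\<^sup>2 * Du v\<bar> \<le> e * h\<^sup>2 \<and> \<bar>\<Delta> h - h\<^sup>2 * Dv u\<bar> \<le> e * h\<^sup>2"
  proof -
    have "\<forall>\<^sub>F h in at_right 0. \<bar>\<Delta> h - h\<^sup>2 * Du v\<bar> \<le> e * h\<^sup>2"
      unfolding \<Delta>_def by (rule second_difference_approx[OF \<open>e > 0\<close> \<open>r > 0\<close> dg dgu])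
    moreover have "\<forall>\<^sub>F h in at_right 0. \<bar>\<Delta> h - h\<^sup>2 * Dv u\<bar> \<le> e * h\<^sup>2"
      using second_difference_approx[OF \<open>e > 0\<close> \<open>r > 0\<close> dg dgv, of u]
      unfolding \<Delta>_def by (simp add: algebra_simps)
    ultimately show ?thesis
      using eventually_at_right_less by eventually_elim blast
  qed
  then obtain h where h: "0 < h" "\<bar>\<Delta> h - h\<^sup>2 * Du v\<bar> \<le> e * h\<^sup>2" "\<bar>\<Delta> h - h\<^sup>2 * Dv u\<bar> \<le> e * h\<^sup>2"
    using eventually_happens'[OF trivial_limit_at_right_real] by blast
  have "h\<^sup>2 * \<bar>Du v - Dv u\<bar> = \<bar>(\<Delta> h - h\<^sup>2 * Dv u) - (\<Delta> h - h\<^sup>2 * Du v)\<bar>"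
    by (simp add: abs_mult left_diff_distrib[symmetric] mult.commute)
  also have "\<dots> \<le> 2 * e * h\<^sup>2"
    using h(2,3) by linarith
  finally show False
    using h(1) \<open>e > 0\<close> by (simp add: e_def)
qed

lemma local_max_hessian_nonpos:
  fixes g :: "'a::real_normed_vector \<Rightarrow> real"
  assumes "r > 0"
    and dg: "\<And>q. q \<in> ball q0 r \<Longrightarrow> (g has_derivative g' q) (at q)"
    and dgu: "((\<lambda>q. g' q u) has_derivative Du) (at q0)"
    and dgv: "((\<lambda>q. g' q v) has_derivative Dv) (at q0)"
    and max: "\<And>q. q \<in> ball q0 r \<Longrightarrow> g q \<le> g q0"
  shows "s\<^sup>2 * Du u + 2 * s * t * Du v + t\<^sup>2 * Dv v \<le> 0"
proof -
  interpret Du: bounded_linear Du using dgu by (rule has_derivative_bounded_linear)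
  interpret Dv: bounded_linear Dv using dgv by (rule has_derivative_bounded_linear)
  define d where "d = s *\<^sub>R u + t *\<^sub>R v"
  define \<rho> where "\<rho> = r / (norm d + 1)"
  have "norm d + 1 > 0" using norm_ge_zero[of d] by linarith
  then have "\<rho> > 0" using \<open>r > 0\<close> by (simp add: \<rho>_def)
  have line: "q0 + \<tau> *\<^sub>R d \<in> ball q0 r" if "\<bar>\<tau>\<bar> < \<rho>" for \<tau>
  proof -
    have "\<bar>\<tau>\<bar> * norm d \<le> \<bar>\<tau>\<bar> * (norm d + 1)" by (simp add: mult_left_mono)
    also have "\<dots> < \<rho> * (norm d + 1)" using that \<open>norm d + 1 > 0\<close> by simp
    also have "\<dots> = r" using \<open>norm d + 1 > 0\<close> by (simp add: \<rho>_def)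
    finally show ?thesis by (simp add: dist_norm)
  qed
  define h' where "h' \<tau> = s * g' (q0 + \<tau> *\<^sub>R d) u + t * g' (q0 + \<tau> *\<^sub>R d) v" for \<tau>
  have "((\<lambda>\<tau>. g (q0 + \<tau> *\<^sub>R d)) has_real_derivative h' \<tau>) (at \<tau>)" if "\<bar>\<tau>\<bar> < \<rho>" for \<tau>
  proof -
    have dq: "(g has_derivative g' (q0 + \<tau> *\<^sub>R d)) (at (q0 + \<tau> *\<^sub>R d))"
      using dg line that by blast
    interpret L: bounded_linear "g' (q0 + \<tau> *\<^sub>R d)" using dq by (rule has_derivative_bounded_linear)
    have "g' (q0 + \<tau> *\<^sub>R d) d = h' \<tau>"
      using L.add[of "s *\<^sub>R u" "t *\<^sub>R v"] L.scale[of s u] L.scale[of t v]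
      by (simp add: h'_def d_def)
    with has_real_derivative_along_line[OF dq] show ?thesis by simp
  qed
  moreover have "(h' has_real_derivative s * Du d + t * Dv d) (at 0)"
    unfolding h'_def
    by (intro DERIV_add DERIV_cmult has_real_derivative_along_line) (simp_all add: dgu dgv)
  ultimately have "s * Du d + t * Dv d \<le> 0"
    using DERIV_local_max_second_nonpos[OF \<open>\<rho> > 0\<close>] max line by force
  moreover have "Dv u = Du v"
    using mixed_derivatives_symmetric[OF \<open>r > 0\<close> dg dgu dgv] by simp
  ultimately show ?thesis
    by (simp add: d_def Du.add Du.scale Dv.add Dv.scale power2_eq_square algebra_simps)
qed

section \<open>The comparison function\<close>

text \<open>For the coefficients produced by \<open>closed_halfplane_sinh_dist\<close> below, a positive multiple
  of the hyperbolic sine of the signed distance to the geodesic \<open>sinh_dist A B C = 0\<close>.\<close>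

definition sinh_dist :: "real \<Rightarrow> real \<Rightarrow> real \<Rightarrow> real \<Rightarrow> real \<Rightarrow> real" where
  "sinh_dist A B C x y = (A * (x\<^sup>2 + y\<^sup>2) + B * x + C) / y"

definition sinh_dist_x :: "real \<Rightarrow> real \<Rightarrow> real \<Rightarrow> real \<Rightarrow> real \<Rightarrow> real" where
  "sinh_dist_x A B C x y = (2 * A * x + B) / y"
definition sinh_dist_y :: "real \<Rightarrow> real \<Rightarrow> real \<Rightarrow> real \<Rightarrow> real \<Rightarrow> real" where
  "sinh_dist_y A B C x y = A - (A * x\<^sup>2 + B * x + C) / y\<^sup>2"
definition sinh_dist_xx :: "real \<Rightarrow> real \<Rightarrow> real \<Rightarrow> real \<Rightarrow> real \<Rightarrow> real" where
  "sinh_dist_xx A B C x y = 2 * A / y"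
definition sinh_dist_xy :: "real \<Rightarrow> real \<Rightarrow> real \<Rightarrow> real \<Rightarrow> real \<Rightarrow> real" where
  "sinh_dist_xy A B C x y = - (2 * A * x + B) / y\<^sup>2"
definition sinh_dist_yy :: "real \<Rightarrow> real \<Rightarrow> real \<Rightarrow> real \<Rightarrow> real \<Rightarrow> real" where
  "sinh_dist_yy A B C x y = 2 * (A * x\<^sup>2 + B * x + C) / y ^ 3"

text \<open>The covariant Hessian, for the metric of \<^const>\<open>hinner\<close>, of a function with partial
  derivatives \<open>wx, wy, wxx, wxy, wyy\<close> at height \<open>y\<close>, evaluated twice on \<open>(-wy, wx)\<close>, the direction
  of its level curve; the terms divided by \<open>y\<close> come from the Christoffel symbols \<^const>\<open>chris\<close>.\<close>

definition level_curve_hessian :: "real \<Rightarrow> real \<Rightarrow> real \<Rightarrow> real \<Rightarrow> real \<Rightarrow> real \<Rightarrow> real" where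
  "level_curve_hessian y wx wy wxx wxy wyy =
     wxx * wy\<^sup>2 - 2 * wxy * wx * wy + wyy * wx\<^sup>2 - (wx * (2 * wy * wx / y) + wy * ((wy\<^sup>2 - wx\<^sup>2) / y))"

text \<open>The whole argument rests on the sign of this Hessian being the sign of \<^const>\<open>sinh_dist\<close>.\<close>

lemma sinh_dist_level_curve_hessian:
  assumes "y > 0"
  shows "level_curve_hessian y (sinh_dist_x A B C x y) (sinh_dist_y A B C x y)
           (sinh_dist_xx A B C x y) (sinh_dist_xy A B C x y) (sinh_dist_yy A B C x y)
         = sinh_dist A B C x y * ((sinh_dist_x A B C x y)\<^sup>2 + (sinh_dist_y A B C x y)\<^sup>2) / y\<^sup>2"
  using assms
  unfolding level_curve_hessian_def sinh_dist_def sinh_dist_x_def sinh_dist_y_def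
    sinh_dist_xx_def sinh_dist_xy_def sinh_dist_yy_def
  by (simp add: field_simps power2_eq_square power3_eq_cube)

lemma closed_halfplane_sinh_dist:
  assumes "closed_halfplane \<gamma> S"
  obtains A B C where "\<And>x y. y > 0 \<Longrightarrow> (sinh_dist_x A B C x y)\<^sup>2 + (sinh_dist_y A B C x y)\<^sup>2 > 0"
    and "S = {(x, y). y > 0 \<and> sinh_dist A B C x y \<le> 0}"
  using assms unfolding closed_halfplane_def
proof (elim disjE exE conjE)
  fix c assume "S = {(x, y). x \<le> c \<and> y > 0}"
  then show thesis
    by (intro that[of 0 1 "- c"]) (auto simp: sinh_dist_def sinh_dist_x_def divide_le_0_iff add_pos_nonneg)
next
  fix c assume "S = {(x, y). x \<ge> c \<and> y > 0}"
  then show thesis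
    by (intro that[of 0 "- 1" c]) (auto simp: sinh_dist_def sinh_dist_x_def divide_le_0_iff add_pos_nonneg)
next
  fix c r :: real assume "S = {(x, y). (x - c)\<^sup>2 + y\<^sup>2 \<le> r\<^sup>2 \<and> y > 0}"
  show thesis
  proof (rule that[of 1 "- 2 * c" "c\<^sup>2 - r\<^sup>2"])
    fix x y :: real assume "y > 0"
    show "(sinh_dist_x 1 (- 2 * c) (c\<^sup>2 - r\<^sup>2) x y)\<^sup>2 + (sinh_dist_y 1 (- 2 * c) (c\<^sup>2 - r\<^sup>2) x y)\<^sup>2 > 0"
    proof (cases "x = c")
      case True
      with \<open>y > 0\<close> have "sinh_dist_y 1 (- 2 * c) (c\<^sup>2 - r\<^sup>2) x y = 1 + r\<^sup>2 / y\<^sup>2"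
        by (simp add: sinh_dist_y_def field_simps power2_eq_square)
      moreover have "1 + r\<^sup>2 / y\<^sup>2 > 0" by (simp add: add_pos_nonneg)
      ultimately show ?thesis by (simp add: sum_power2_gt_zero_iff)
    qed (use \<open>y > 0\<close> in \<open>simp add: sinh_dist_x_def add_pos_nonneg\<close>)
  qed (auto simp: \<open>S = _\<close> sinh_dist_def field_simps power2_eq_square divide_le_0_iff)
next
  fix c r :: real assume "S = {(x, y). (x - c)\<^sup>2 + y\<^sup>2 \<ge> r\<^sup>2 \<and> y > 0}"
  show thesis
  proof (rule that[of "- 1" "2 * c" "r\<^sup>2 - c\<^sup>2"])
    fix x y :: real assume "y > 0"
    show "(sinh_dist_x (- 1) (2 * c) (r\<^sup>2 - c\<^sup>2) x y)\<^sup>2 + (sinh_dist_y (- 1) (2 * c) (r\<^sup>2 - c\<^sup>2) x y)\<^sup>2 > 0"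
    proof (cases "x = c")
      case True
      with \<open>y > 0\<close> have "sinh_dist_y (- 1) (2 * c) (r\<^sup>2 - c\<^sup>2) x y = - (1 + r\<^sup>2 / y\<^sup>2)"
        by (simp add: sinh_dist_y_def field_simps power2_eq_square)
      moreover have "1 + r\<^sup>2 / y\<^sup>2 > 0" by (simp add: add_pos_nonneg)
      ultimately show ?thesis by (simp add: sum_power2_gt_zero_iff)
    qed (use \<open>y > 0\<close> in \<open>simp add: sinh_dist_x_def add_pos_nonneg\<close>)
  qed (auto simp: \<open>S = _\<close> sinh_dist_def field_simps power2_eq_square divide_le_0_iff)
qed

definition sinh_dist_diff :: "real \<Rightarrow> real \<Rightarrow> real \<Rightarrow> pt \<Rightarrow> pt \<Rightarrow> real" where
  "sinh_dist_diff A B C p a =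
     sinh_dist_x A B C (cx p) (cy p) * cx a + sinh_dist_y A B C (cx p) (cy p) * cy a"

text \<open>By the chain rule, the mixed second derivative of \<^const>\<open>sinh_dist\<close> composed with a map
  \<open>F\<close> at a point where \<open>F = p\<close>, the first derivatives of \<open>F\<close> are \<open>a\<close> and \<open>b\<close>, and its mixed
  second derivative is \<open>c\<close>.\<close>

definition sinh_dist_hess :: "real \<Rightarrow> real \<Rightarrow> real \<Rightarrow> pt \<Rightarrow> pt \<Rightarrow> pt \<Rightarrow> pt \<Rightarrow> real" where
  "sinh_dist_hess A B C p a b c =
     sinh_dist_xx A B C (cx p) (cy p) * cx a * cx b
     + sinh_dist_xy A B C (cx p) (cy p) * (cx a * cy b + cy a * cx b)
     + sinh_dist_yy A B C (cx p) (cy p) * cy a * cy b + sinh_dist_diff A B C p c"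

lemma sinh_dist_comp_has_derivative:
  fixes F :: "'a::real_normed_vector \<Rightarrow> pt"
  assumes "(F has_derivative F') (at q)" "cy (F q) > 0"
  shows "((\<lambda>q. sinh_dist A B C (cx (F q)) (cy (F q))) has_derivative
           (\<lambda>h. sinh_dist_diff A B C (F q) (F' h))) (at q)"
  using assms unfolding sinh_dist_def sinh_dist_diff_def sinh_dist_x_def sinh_dist_y_def cx_def cy_def
  by (auto intro!: derivative_eq_intros simp: fun_eq_iff field_simps power2_eq_square)

lemma sinh_dist_diff_has_derivative:
  fixes F G :: "'a::real_normed_vector \<Rightarrow> pt"
  assumes "(F has_derivative F') (at q)" "(G has_derivative G') (at q)" "cy (F q) > 0"
  shows "((\<lambda>q. sinh_dist_diff A B C (F q) (G q)) has_derivative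
           (\<lambda>h. sinh_dist_hess A B C (F q) (F' h) (G q) (G' h))) (at q)"
  using assms
  unfolding sinh_dist_diff_def sinh_dist_hess_def sinh_dist_x_def sinh_dist_y_def
    sinh_dist_xx_def sinh_dist_xy_def sinh_dist_yy_def cx_def cy_def
  by (auto intro!: derivative_eq_intros simp: fun_eq_iff field_simps eval_nat_numeral)

lemma local_max_sinh_dist_conditions:
  fixes F :: "real \<times> real \<Rightarrow> pt"
  assumes C2: "C2_on U F" and "F ` U \<subseteq> HxR" and "r > 0" "ball q r \<subseteq> U"
    and max: "\<And>q'. q' \<in> ball q r \<Longrightarrow>
      sinh_dist A B C (cx (F q')) (cy (F q')) \<le> sinh_dist A B C (cx (F q)) (cy (F q))"
  shows "sinh_dist_diff A B C (F q) (pd1 F q) = 0" "sinh_dist_diff A B C (F q) (pd2 F q) = 0"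
    and "s\<^sup>2 * sinh_dist_hess A B C (F q) (pd1 F q) (pd1 F q) (pd1 (pd1 F) q)
      + 2 * s * t * sinh_dist_hess A B C (F q) (pd2 F q) (pd1 F q) (pd2 (pd1 F) q)
      + t\<^sup>2 * sinh_dist_hess A B C (F q) (pd2 F q) (pd2 F q) (pd2 (pd2 F) q) \<le> 0"
proof -
  define DF where "DF q' = frechet_derivative F (at q')" for q'
  have dF: "(F has_derivative DF q') (at q')" "cy (F q') > 0" if "q' \<in> ball q r" for q'
  proof -
    have "q' \<in> U" using that assms(4) by blast
    then show "(F has_derivative DF q') (at q')" "cy (F q') > 0"
      using C2 assms(2) by (auto simp: C2_on_def DF_def HxR_def image_subset_iff frechet_derivative_works)
  qed
  have dg: "((\<lambda>q. sinh_dist A B C (cx (F q)) (cy (F q))) has_derivative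
      (\<lambda>h. sinh_dist_diff A B C (F q') (DF q' h))) (at q')" if "q' \<in> ball q r" for q'
    using sinh_dist_comp_has_derivative[OF dF[OF that]] .
  have "q \<in> ball q r" using \<open>r > 0\<close> by simp
  have pd: "DF q (1, 0) = pd1 F q" "DF q (0, 1) = pd2 F q"
    by (simp_all add: DF_def pd1_def pd2_def)
  have "(\<lambda>h. sinh_dist_diff A B C (F q) (DF q h)) = (\<lambda>h. 0)"
    using differential_zero_maxmin[OF \<open>q \<in> ball q r\<close> open_ball dg[OF \<open>q \<in> ball q r\<close>]] max by blast
  then show "sinh_dist_diff A B C (F q) (pd1 F q) = 0" "sinh_dist_diff A B C (F q) (pd2 F q) = 0"
    unfolding pd[symmetric] by meson+
  have "q \<in> U" using \<open>q \<in> ball q r\<close> assms(4) by blast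
  then have "pd1 F differentiable (at q)" "pd2 F differentiable (at q)"
    using C2 by (auto simp: C2_on_def)
  then have "((\<lambda>q'. sinh_dist_diff A B C (F q') (DF q' u)) has_derivative
      (\<lambda>h. sinh_dist_hess A B C (F q) (DF q h) (DF q u) (frechet_derivative (\<lambda>q'. DF q' u) (at q) h))) (at q)"
    if "u = (1, 0) \<or> u = (0, 1)" for u
    using that sinh_dist_diff_has_derivative[OF dF(1)[OF \<open>q \<in> ball q r\<close>] _ dF(2)[OF \<open>q \<in> ball q r\<close>]]
    by (auto simp: DF_def pd1_def[abs_def] pd2_def[abs_def] frechet_derivative_works)
  from local_max_hessian_nonpos[OF \<open>r > 0\<close> dg this this max, of "(1, 0)" "(0, 1)" s t]
  show "s\<^sup>2 * sinh_dist_hess A B C (F q) (pd1 F q) (pd1 F q) (pd1 (pd1 F) q)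
      + 2 * s * t * sinh_dist_hess A B C (F q) (pd2 F q) (pd1 F q) (pd2 (pd1 F) q)
      + t\<^sup>2 * sinh_dist_hess A B C (F q) (pd2 F q) (pd2 F q) (pd2 (pd2 F) q) \<le> 0"
    by (simp add: pd DF_def pd1_def[abs_def] pd2_def[abs_def])
qed

section \<open>Tangency with a vertical equidistant cylinder\<close>

lemma nonpos_form_trace_nonpos:
  fixes H11 H12 H22 E F G :: real
  assumes nonpos: "\<And>s t. s\<^sup>2 * H11 + 2 * s * t * H12 + t\<^sup>2 * H22 \<le> 0"
    and "G > 0" "E * G - F\<^sup>2 > 0"
  shows "H11 * G - 2 * H12 * F + H22 * E \<le> 0"
proof -
  have "G * (H11 * G - 2 * H12 * F + H22 * E)
      = (G\<^sup>2 * H11 + 2 * G * (- F) * H12 + (- F)\<^sup>2 * H22) + (E * G - F\<^sup>2) * H22"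
    by (simp add: algebra_simps power2_eq_square)
  also have "\<dots> \<le> 0"
    using nonpos[of G "- F"] nonpos[of 0 1] \<open>E * G - F\<^sup>2 > 0\<close>
    by (simp add: add_nonpos_nonpos mult_nonneg_nonpos)
  finally show ?thesis
    using \<open>G > 0\<close> by (simp add: mult_le_0_iff)
qed

lemma orthogonal_eq_rotated_multiple:
  fixes wx wy a1 a2 :: real
  assumes "wx\<^sup>2 + wy\<^sup>2 \<noteq> 0" "wx * a1 + wy * a2 = 0"
  obtains \<alpha> where "a1 = - \<alpha> * wy" "a2 = \<alpha> * wx"
proof
  let ?N = "wx\<^sup>2 + wy\<^sup>2"
  let ?\<alpha> = "(a2 * wx - a1 * wy) / ?N"
  have "a1 * ?N - (- (a2 * wx - a1 * wy) * wy) = wx * (wx * a1 + wy * a2)"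
    "a2 * ?N - (a2 * wx - a1 * wy) * wx = wy * (wx * a1 + wy * a2)"
    by (simp_all add: algebra_simps power2_eq_square)
  then have "a1 * ?N = - (a2 * wx - a1 * wy) * wy" "a2 * ?N = (a2 * wx - a1 * wy) * wx"
    using assms(2) by simp_all
  then show "a1 = - ?\<alpha> * wy" "a2 = ?\<alpha> * wx"
    using assms(1) by (simp_all add: field_simps)
qed

lemma tangent_plane_frame:
  fixes wx wy :: real and a b :: pt
  assumes "wx\<^sup>2 + wy\<^sup>2 \<noteq> 0" "wx * cx a + wy * cy a = 0" "wx * cx b + wy * cy b = 0"
    and "a \<noteq> 0" "\<forall>c. b \<noteq> c *\<^sub>R a"
  obtains \<alpha> \<gamma> where "a = (- \<alpha> * wy, \<alpha> * wx, cz a)" "b = (- \<gamma> * wy, \<gamma> * wx, cz b)"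
    "\<alpha> * cz b - \<gamma> * cz a \<noteq> 0"
proof -
  have coords: "v = (cx v, cy v, cz v)" for v :: pt
    by (simp add: cx_def cy_def cz_def)
  obtain \<alpha> where \<alpha>: "a = (- \<alpha> * wy, \<alpha> * wx, cz a)"
    using orthogonal_eq_rotated_multiple[OF assms(1,2)] coords[of a] by metis
  obtain \<gamma> where \<gamma>: "b = (- \<gamma> * wy, \<gamma> * wx, cz b)"
    using orthogonal_eq_rotated_multiple[OF assms(1,3)] coords[of b] by metis
  have "\<alpha> * cz b - \<gamma> * cz a \<noteq> 0"
  proof
    assume dep: "\<alpha> * cz b - \<gamma> * cz a = 0"
    have "b = k *\<^sub>R a" if "\<gamma> = k * \<alpha>" "cz b = k * cz a" for k
      using that \<alpha> \<gamma> by (simp add: prod_eq_iff cx_def cy_def cz_def)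
    moreover have "\<exists>k. \<gamma> = k * \<alpha> \<and> cz b = k * cz a"
    proof (cases "\<alpha> = 0")
      case True
      with \<alpha> \<open>a \<noteq> 0\<close> have "cz a \<noteq> 0" by (auto simp: zero_prod_def)
      with dep True show ?thesis by (intro exI[of _ "cz b / cz a"]) simp
    next
      case False
      with dep show ?thesis by (intro exI[of _ "\<gamma> / \<alpha>"]) (simp add: field_simps)
    qed
    ultimately show False using assms(5) by blast
  qed
  with \<alpha> \<gamma> that show thesis by blast
qed

lemma normal_to_vertical_plane:
  fixes x y z wx wy \<alpha> \<gamma> a3 b3 :: real and n :: pt
  assumes "y > 0" "wx\<^sup>2 + wy\<^sup>2 \<noteq> 0" "\<alpha> * b3 - \<gamma> * a3 \<noteq> 0"
    and "hinner (x, y, z) n (- \<alpha> * wy, \<alpha> * wx, a3) = 0"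
    and "hinner (x, y, z) n (- \<gamma> * wy, \<gamma> * wx, b3) = 0"
    and "hinner (x, y, z) n n = 1"
  obtains \<nu> where "n = (\<nu> * wx, \<nu> * wy, 0)" "\<nu> \<noteq> 0"
proof -
  obtain n1 n2 n3 where n: "n = (n1, n2, n3)" by (metis prod.collapse)
  define s where "s = n2 * wx - n1 * wy"
  define s' where "s' = s / y\<^sup>2"
  have e: "\<alpha> * s' + a3 * n3 = 0" "\<gamma> * s' + b3 * n3 = 0"
    using assms(4,5) by (simp_all add: n s'_def s_def hinner_def cx_def cy_def cz_def algebra_simps)
  have "(\<alpha> * b3 - \<gamma> * a3) * s' = b3 * (\<alpha> * s' + a3 * n3) - a3 * (\<gamma> * s' + b3 * n3)"
    "(\<alpha> * b3 - \<gamma> * a3) * n3 = \<alpha> * (\<gamma> * s' + b3 * n3) - \<gamma> * (\<alpha> * s' + a3 * n3)"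
    by (simp_all add: algebra_simps)
  then have "(\<alpha> * b3 - \<gamma> * a3) * s' = 0" "(\<alpha> * b3 - \<gamma> * a3) * n3 = 0"
    using e by simp_all
  then have "s = 0" "n3 = 0" using assms(1,3) by (simp_all add: s'_def)
  then obtain \<beta> where "n1 = - \<beta> * wx" "n2 = \<beta> * - wy"
    using orthogonal_eq_rotated_multiple[of "- wy" wx n1 n2] assms(2) by (auto simp: s_def algebra_simps)
  then have "n = ((- \<beta>) * wx, (- \<beta>) * wy, 0)" using n \<open>n3 = 0\<close> by simp
  moreover have "- \<beta> \<noteq> 0" using assms(6) calculation by (auto simp: hinner_def cx_def cy_def cz_def)
  ultimately show thesis by (rule that)
qed

lemma hessian_eq_second_fundamental_form:
  fixes x y z wx wy wxx wxy wyy \<alpha> \<gamma> \<nu> a3 b3 :: real and c :: pt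
  assumes "y > 0" "\<nu> \<noteq> 0"
  shows "wxx * (- \<alpha> * wy) * (- \<gamma> * wy) + wxy * ((- \<alpha> * wy) * (\<gamma> * wx) + (\<alpha> * wx) * (- \<gamma> * wy))
      + wyy * (\<alpha> * wx) * (\<gamma> * wx) + wx * cx c + wy * cy c
    = y\<^sup>2 / \<nu> * hinner (x, y, z) (c + chris (x, y, z) (- \<alpha> * wy, \<alpha> * wx, a3) (- \<gamma> * wy, \<gamma> * wx, b3))
        (\<nu> * wx, \<nu> * wy, 0)
      + \<alpha> * \<gamma> * level_curve_hessian y wx wy wxx wxy wyy"
  using assms
  by (simp add: level_curve_hessian_def hinner_def chris_def cx_def cy_def cz_def field_simps power2_eq_square)

lemma minimal_tangency_hessian_not_nonpos:
  fixes F :: "real \<times> real \<Rightarrow> pt" and q :: "real \<times> real" and A B C x y z \<alpha> \<gamma> \<nu> a3 b3 :: real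
  defines "wx \<equiv> sinh_dist_x A B C x y" and "wy \<equiv> sinh_dist_y A B C x y"
  assumes p: "F q = (x, y, z)" and a: "pd1 F q = (- \<alpha> * wy, \<alpha> * wx, a3)"
    and b: "pd2 F q = (- \<gamma> * wy, \<gamma> * wx, b3)"
    and "y > 0" "wx\<^sup>2 + wy\<^sup>2 > 0" "sinh_dist A B C x y > 0" "\<nu> \<noteq> 0" and D: "\<alpha> * b3 - \<gamma> * a3 \<noteq> 0"
    and hess: "\<And>s t. s\<^sup>2 * sinh_dist_hess A B C (F q) (pd1 F q) (pd1 F q) (pd1 (pd1 F) q)
        + 2 * s * t * sinh_dist_hess A B C (F q) (pd2 F q) (pd1 F q) (pd2 (pd1 F) q)
        + t\<^sup>2 * sinh_dist_hess A B C (F q) (pd2 F q) (pd2 F q) (pd2 (pd2 F) q) \<le> 0"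
    and minimal: "mean_curv F (\<nu> * wx, \<nu> * wy, 0) q = 0"
  shows False
proof -
  define n :: pt where "n = (\<nu> * wx, \<nu> * wy, 0)"
  define k where "k = level_curve_hessian y wx wy
      (sinh_dist_xx A B C x y) (sinh_dist_xy A B C x y) (sinh_dist_yy A B C x y)"
  have "k > 0"
    using sinh_dist_level_curve_hessian[OF \<open>y > 0\<close>, of A B C x] \<open>y > 0\<close> \<open>wx\<^sup>2 + wy\<^sup>2 > 0\<close>
      \<open>sinh_dist A B C x y > 0\<close> by (simp add: k_def wx_def wy_def)
  define M where "M = (wx\<^sup>2 + wy\<^sup>2) / y\<^sup>2"
  have "M > 0" using \<open>wx\<^sup>2 + wy\<^sup>2 > 0\<close> \<open>y > 0\<close> by (simp add: M_def)
  define g11 where "g11 = hinner (F q) (pd1 F q) (pd1 F q)"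
  define g12 where "g12 = hinner (F q) (pd1 F q) (pd2 F q)"
  define g22 where "g22 = hinner (F q) (pd2 F q) (pd2 F q)"
  have g: "g11 = \<alpha>\<^sup>2 * M + a3\<^sup>2" "g12 = \<alpha> * \<gamma> * M + a3 * b3" "g22 = \<gamma>\<^sup>2 * M + b3\<^sup>2"
    by (simp_all add: g11_def g12_def g22_def p a b M_def hinner_def cx_def cy_def cz_def
        field_simps power2_eq_square)
  have "g11 * g22 - g12\<^sup>2 = M * (\<alpha> * b3 - \<gamma> * a3)\<^sup>2"
    by (simp add: g algebra_simps power2_eq_square)
  then have det: "g11 * g22 - g12\<^sup>2 > 0" using \<open>M > 0\<close> D by simp
  then have "g11 * g22 > 0" using zero_le_power2[of g12] by linarith
  moreover have "g22 \<ge> 0" using \<open>M > 0\<close> by (simp add: g)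
  ultimately have "g22 > 0" by (auto simp: order_le_less)
  define h11 where "h11 = hinner (F q) (pd1 (pd1 F) q + chris (F q) (pd1 F q) (pd1 F q)) n"
  define h12 where "h12 = hinner (F q) (pd2 (pd1 F) q + chris (F q) (pd1 F q) (pd2 F q)) n"
  define h22 where "h22 = hinner (F q) (pd2 (pd2 F) q + chris (F q) (pd2 F q) (pd2 F q)) n"
  have "(h11 * g22 - 2 * h12 * g12 + h22 * g11) / (2 * (g11 * g22 - g12\<^sup>2)) = 0"
    using minimal unfolding mean_curv_def Let_def g11_def g12_def g22_def h11_def h12_def h22_def n_def .
  then have trace_II: "h11 * g22 - 2 * h12 * g12 + h22 * g11 = 0" using det by simp
  have hess_eq: "sinh_dist_hess A B C (F q) (pd1 F q) (pd1 F q) (pd1 (pd1 F) q) = y\<^sup>2 / \<nu> * h11 + \<alpha> * \<alpha> * k"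
    "sinh_dist_hess A B C (F q) (pd2 F q) (pd1 F q) (pd2 (pd1 F) q) = y\<^sup>2 / \<nu> * h12 + \<alpha> * \<gamma> * k"
    "sinh_dist_hess A B C (F q) (pd2 F q) (pd2 F q) (pd2 (pd2 F) q) = y\<^sup>2 / \<nu> * h22 + \<gamma> * \<gamma> * k"
    using hessian_eq_second_fundamental_form[OF \<open>y > 0\<close> \<open>\<nu> \<noteq> 0\<close>, where x = x and z = z
        and wx = wx and wy = wy and wxx = "sinh_dist_xx A B C x y" and wxy = "sinh_dist_xy A B C x y"
        and wyy = "sinh_dist_yy A B C x y"]
    by (simp_all add: sinh_dist_hess_def sinh_dist_diff_def h11_def h12_def h22_def k_def p a b n_def
        wx_def wy_def cx_def cy_def)
  txt \<open>Trace the Hessian against the metric: the second fundamental form contributes the mean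
    curvature, which vanishes, and the level curve contributes \<open>k (\<alpha> b3 - \<gamma> a3)\<^sup>2\<close>.\<close>
  have "0 < k * (\<alpha> * b3 - \<gamma> * a3)\<^sup>2"
    using \<open>k > 0\<close> D by simp
  also have "\<dots> = y\<^sup>2 / \<nu> * (h11 * g22 - 2 * h12 * g12 + h22 * g11) + k * (\<alpha> * b3 - \<gamma> * a3)\<^sup>2"
    using trace_II by simp
  also have "\<dots> = sinh_dist_hess A B C (F q) (pd1 F q) (pd1 F q) (pd1 (pd1 F) q) * g22
      - 2 * sinh_dist_hess A B C (F q) (pd2 F q) (pd1 F q) (pd2 (pd1 F) q) * g12
      + sinh_dist_hess A B C (F q) (pd2 F q) (pd2 F q) (pd2 (pd2 F) q) * g11"
    unfolding hess_eq by (simp add: g algebra_simps power2_eq_square add_divide_distrib)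
  also have "\<dots> \<le> 0"
    by (rule nonpos_form_trace_nonpos[OF hess \<open>g22 > 0\<close> det])
  finally show False by simp
qed

lemma soliton_equation_excludes_sinh_dist_max:
  fixes F :: "real \<times> real \<Rightarrow> pt" and q :: "real \<times> real" and n :: pt
  defines "p \<equiv> F q" and "a \<equiv> pd1 F q" and "b \<equiv> pd2 F q"
  assumes "cy p > 0"
    and grad: "(sinh_dist_x A B C (cx p) (cy p))\<^sup>2 + (sinh_dist_y A B C (cx p) (cy p))\<^sup>2 > 0"
    and pos: "sinh_dist A B C (cx p) (cy p) > 0"
    and crit: "sinh_dist_diff A B C p a = 0" "sinh_dist_diff A B C p b = 0"
    and hess: "\<And>s t. s\<^sup>2 * sinh_dist_hess A B C p a a (pd1 (pd1 F) q)
        + 2 * s * t * sinh_dist_hess A B C p b a (pd2 (pd1 F) q)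
        + t\<^sup>2 * sinh_dist_hess A B C p b b (pd2 (pd2 F) q) \<le> 0"
    and imm: "a \<noteq> 0" "\<forall>c. b \<noteq> c *\<^sub>R a"
    and normal: "hinner p n a = 0" "hinner p n b = 0" "hinner p n n = 1"
    and soliton: "mean_curv F n q = hinner p n vert_field"
  shows False
proof -
  obtain x y z where p: "p = (x, y, z)" by (metis prod.collapse)
  have "y > 0" using \<open>cy p > 0\<close> by (simp add: p cy_def)
  define wx where "wx = sinh_dist_x A B C x y"
  define wy where "wy = sinh_dist_y A B C x y"
  have "wx\<^sup>2 + wy\<^sup>2 > 0" using grad by (simp add: p wx_def wy_def cx_def cy_def)
  then have nz: "wx\<^sup>2 + wy\<^sup>2 \<noteq> 0" by linarith
  define a3 where "a3 = cz a"
  define b3 where "b3 = cz b"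
  have "wx * cx a + wy * cy a = 0" "wx * cx b + wy * cy b = 0"
    using crit by (simp_all add: sinh_dist_diff_def p wx_def wy_def cx_def cy_def)
  then obtain \<alpha> \<gamma> where a: "a = (- \<alpha> * wy, \<alpha> * wx, a3)" and b: "b = (- \<gamma> * wy, \<gamma> * wx, b3)"
      and D: "\<alpha> * b3 - \<gamma> * a3 \<noteq> 0"
    using tangent_plane_frame[OF nz _ _ imm] unfolding a3_def b3_def by blast
  obtain \<nu> where n: "n = (\<nu> * wx, \<nu> * wy, 0)" and "\<nu> \<noteq> 0"
    using normal_to_vertical_plane[OF \<open>y > 0\<close> nz D, of x z n] normal unfolding p a b by blast
  txt \<open>The normal is horizontal, so the soliton equation makes the surface minimal at \<open>q\<close>.\<close>
  have minimal: "mean_curv F (\<nu> * wx, \<nu> * wy, 0) q = 0"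
    using soliton by (simp add: n hinner_def vert_field_def cx_def cy_def cz_def)
  have "sinh_dist A B C x y > 0" using pos by (simp add: p cx_def cy_def)
  from p a b \<open>y > 0\<close> \<open>wx\<^sup>2 + wy\<^sup>2 > 0\<close> this \<open>\<nu> \<noteq> 0\<close> D hess minimal show False
    unfolding p_def a_def b_def wx_def wy_def by (rule minimal_tangency_hessian_not_nonpos)
qed

section \<open>The maximum principle\<close>

lemma surface_chart_continuous:
  assumes "surface_chart T f U \<psi> F"
  shows "continuous_map (subtopology T (\<psi> ` (U \<inter> closed_upper))) euclidean f"
proof -
  let ?W = "\<psi> ` (U \<inter> closed_upper)"
  obtain \<psi>' where hm: "homeomorphic_maps (top_of_set (U \<inter> closed_upper)) (subtopology T ?W) \<psi> \<psi>'"
    using assms unfolding surface_chart_def homeomorphic_map_maps by blast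
  then have \<psi>': "continuous_map (subtopology T ?W) (top_of_set (U \<inter> closed_upper)) \<psi>'"
    and inv: "\<And>x. x \<in> topspace (subtopology T ?W) \<Longrightarrow> \<psi> (\<psi>' x) = x"
    unfolding homeomorphic_maps_def by blast+
  have "continuous_on U F"
    using assms by (auto simp: surface_chart_def C2_on_def intro!: differentiable_imp_continuous_on
        differentiable_at_imp_differentiable_on)
  then have "continuous_map (subtopology T ?W) euclidean (F \<circ> \<psi>')"
    by (intro continuous_map_compose[OF \<psi>']) (auto intro: continuous_on_subset)
  moreover have "(F \<circ> \<psi>') x = f x" if "x \<in> topspace (subtopology T ?W)" for x
  proof -
    have "\<psi>' x \<in> U \<inter> closed_upper"
      using continuous_map_image_subset_topspace[OF \<psi>'] that by auto
    then show ?thesis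
      using assms inv[OF that] unfolding surface_chart_def by (metis comp_apply)
  qed
  ultimately show ?thesis by (rule continuous_map_eq)
qed

lemma compact_immersed_surface_continuous:
  assumes "compact_immersed_surface T f"
  shows "continuous_map T euclidean f"
proof (rule pasting_lemma[where I = "{W. openin T W \<and> continuous_map (subtopology T W) euclidean f}"
      and T = "\<lambda>W. W" and f = "\<lambda>_. f"])
  fix x assume "x \<in> topspace T"
  then obtain U \<psi> F where ch: "surface_chart T f U \<psi> F" and "x \<in> \<psi> ` (U \<inter> closed_upper)"
    using assms unfolding compact_immersed_surface_def by blast
  moreover have "openin T (\<psi> ` (U \<inter> closed_upper))"
    using ch by (simp add: surface_chart_def)
  ultimately show "\<exists>W. W \<in> {W. openin T W \<and> continuous_map (subtopology T W) euclidean f} \<and> x \<in> W \<and> f x = f x"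
    using surface_chart_continuous[OF ch] by blast
qed auto

lemma compact_immersed_surface_in_HxR:
  assumes "compact_immersed_surface T f" "x \<in> topspace T"
  shows "f x \<in> HxR"
proof -
  obtain U \<psi> F q where "surface_chart T f U \<psi> F" "q \<in> U \<inter> closed_upper" "x = \<psi> q"
    using assms unfolding compact_immersed_surface_def by blast
  then show ?thesis by (auto simp: surface_chart_def)
qed

lemma compact_immersed_surface_interior_chart:
  assumes "compact_immersed_surface T f" "x \<in> topspace T" "x \<notin> surface_boundary T f"
  obtains U \<psi> F q where "surface_chart T f U \<psi> F" "q \<in> U" "snd q > 0" "\<psi> q = x"
proof -
  obtain U \<psi> F where "surface_chart T f U \<psi> F" "x \<in> \<psi> ` (U \<inter> closed_upper)"
    using assms(1,2) unfolding compact_immersed_surface_def by blast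
  moreover from this obtain q where "q \<in> U" "snd q \<ge> 0" "\<psi> q = x"
    by (auto simp: closed_upper_def)
  moreover have "snd q \<noteq> 0"
    using assms(3) calculation unfolding surface_boundary_def by blast
  ultimately show thesis using that by simp
qed

lemma sinh_dist_surface_continuous:
  assumes "compact_immersed_surface T f"
  shows "continuous_map T euclidean (\<lambda>x. sinh_dist A B C (cx (f x)) (cy (f x)))"
proof -
  have "continuous_map T (top_of_set HxR) f"
    using compact_immersed_surface_continuous[OF assms] compact_immersed_surface_in_HxR[OF assms]
    by (simp add: continuous_map_into_subtopology)
  moreover have "continuous_on HxR (\<lambda>p. sinh_dist A B C (cx p) (cy p))"
    unfolding sinh_dist_def cx_def cy_def HxR_def by (intro continuous_intros) auto
  ultimately show ?thesis
    using continuous_map_compose[of T "top_of_set HxR" f euclidean "\<lambda>p. sinh_dist A B C (cx p) (cy p)"]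
    by (simp add: o_def)
qed

lemma soliton_no_positive_interior_max:
  assumes sol: "translating_soliton T f \<eta>" and ch: "surface_chart T f U \<psi> F"
    and "q \<in> U" "snd q > 0"
    and grad: "\<And>x y. y > 0 \<Longrightarrow> (sinh_dist_x A B C x y)\<^sup>2 + (sinh_dist_y A B C x y)\<^sup>2 > 0"
    and max: "\<And>x. x \<in> topspace T \<Longrightarrow>
      sinh_dist A B C (cx (f x)) (cy (f x)) \<le> sinh_dist A B C (cx (f (\<psi> q))) (cy (f (\<psi> q)))"
    and pos: "sinh_dist A B C (cx (f (\<psi> q))) (cy (f (\<psi> q))) > 0"
  shows False
proof -
  note chart = ch[unfolded surface_chart_def]
  have "open (U \<inter> {q'. snd q' > 0})"
    using chart by (auto intro!: open_Int open_Collect_less continuous_intros)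
  then obtain r where "r > 0" and r: "ball q r \<subseteq> U \<inter> {q'. snd q' > 0}"
    using \<open>q \<in> U\<close> \<open>snd q > 0\<close> open_contains_ball by blast
  then have interior: "q' \<in> U \<inter> closed_upper" if "q' \<in> ball q r" for q'
    using that by (auto simp: closed_upper_def)
  then have "ball q r \<subseteq> U" by blast
  have "\<psi> ` (U \<inter> closed_upper) \<subseteq> topspace T"
    using chart openin_subset by blast
  then have local_max: "sinh_dist A B C (cx (F q')) (cy (F q')) \<le> sinh_dist A B C (cx (F q)) (cy (F q))"
    if "q' \<in> ball q r" for q'
    using max[of "\<psi> q'"] interior[OF that] interior[of q] \<open>r > 0\<close> chart by auto
  have C2: "C2_on U F" and "F ` U \<subseteq> HxR" and imm: "immersion_on U F"
    using chart by blast+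
  note max_conditions =
    local_max_sinh_dist_conditions[OF C2 \<open>F ` U \<subseteq> HxR\<close> \<open>r > 0\<close> \<open>ball q r \<subseteq> U\<close> local_max]
  have "F q = f (\<psi> q)" "q \<in> U \<inter> closed_upper"
    using chart interior[of q] \<open>r > 0\<close> by auto
  have "cy (F q) > 0" using \<open>F ` U \<subseteq> HxR\<close> \<open>q \<in> U\<close> by (auto simp: HxR_def)
  have "unit_normal T f \<eta>"
    and mc: "mean_curv F (\<eta> (\<psi> q)) q = hinner (F q) (\<eta> (\<psi> q)) vert_field"
    using sol ch \<open>q \<in> U\<close> \<open>snd q > 0\<close> unfolding translating_soliton_def by blast+
  then have "hinner (F q) (\<eta> (\<psi> q)) (pd1 F q) = 0" "hinner (F q) (\<eta> (\<psi> q)) (pd2 F q) = 0"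
    "hinner (F q) (\<eta> (\<psi> q)) (\<eta> (\<psi> q)) = 1"
    using ch \<open>q \<in> U \<inter> closed_upper\<close> unfolding unit_normal_def by blast+
  moreover have "pd1 F q \<noteq> 0" "\<forall>c. pd2 F q \<noteq> c *\<^sub>R pd1 F q"
    using imm \<open>q \<in> U\<close> by (auto simp: immersion_on_def)
  ultimately show False
    using soliton_equation_excludes_sinh_dist_max[OF \<open>cy (F q) > 0\<close> grad[OF \<open>cy (F q) > 0\<close>] _
        max_conditions _ _ _ _ _ mc]
      pos \<open>F q = f (\<psi> q)\<close> by auto
qed

lemma soliton_sinh_dist_max_principle:
  assumes sol: "translating_soliton T f \<eta>"
    and grad: "\<And>x y. y > 0 \<Longrightarrow> (sinh_dist_x A B C x y)\<^sup>2 + (sinh_dist_y A B C x y)\<^sup>2 > 0"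
    and boundary: "\<And>x. x \<in> surface_boundary T f \<Longrightarrow> sinh_dist A B C (cx (f x)) (cy (f x)) \<le> 0"
    and "x \<in> topspace T"
  shows "sinh_dist A B C (cx (f x)) (cy (f x)) \<le> 0"
proof (rule ccontr)
  assume "\<not> ?thesis"
  define w where "w x = sinh_dist A B C (cx (f x)) (cy (f x))" for x
  have surf: "compact_immersed_surface T f"
    using sol by (simp add: translating_soliton_def)
  then have "compactin euclidean (w ` topspace T)"
    using image_compactin[OF _ sinh_dist_surface_continuous[OF surf]]
    by (simp add: w_def compact_immersed_surface_def compact_space_def)
  moreover have "w ` topspace T \<noteq> {}" using \<open>x \<in> topspace T\<close> by blast
  ultimately obtain x0 where "x0 \<in> topspace T" and max: "\<And>x. x \<in> topspace T \<Longrightarrow> w x \<le> w x0"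
    using compact_attains_sup[of "w ` topspace T"] by auto
  with \<open>\<not> ?thesis\<close> \<open>x \<in> topspace T\<close> have "w x0 > 0"
    unfolding w_def by force
  then have "x0 \<notin> surface_boundary T f"
    using boundary unfolding w_def by force
  then obtain U \<psi> F q where "surface_chart T f U \<psi> F" "q \<in> U" "snd q > 0" "\<psi> q = x0"
    using compact_immersed_surface_interior_chart[OF surf \<open>x0 \<in> topspace T\<close>] by blast
  then show False
    using soliton_no_positive_interior_max[OF sol _ _ _ grad] max \<open>w x0 > 0\<close>
    unfolding w_def by blast
qed

lemma soliton_in_closed_halfplane:
  assumes sol: "translating_soliton T f \<eta>" and "closed_halfplane \<gamma> S"
    and "\<forall>x\<in>surface_boundary T f. proj_H2 (f x) \<in> S"
    and "x \<in> topspace T"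
  shows "proj_H2 (f x) \<in> S"
proof -
  obtain A B C where grad: "\<And>x y. y > 0 \<Longrightarrow> (sinh_dist_x A B C x y)\<^sup>2 + (sinh_dist_y A B C x y)\<^sup>2 > 0"
    and S: "S = {(x, y). y > 0 \<and> sinh_dist A B C x y \<le> 0}"
    using closed_halfplane_sinh_dist[OF \<open>closed_halfplane \<gamma> S\<close>] by blast
  have "sinh_dist A B C (cx (f x)) (cy (f x)) \<le> 0"
    using soliton_sinh_dist_max_principle[OF sol grad _ \<open>x \<in> topspace T\<close>] assms(3)
    by (auto simp: S proj_H2_def)
  moreover have "cy (f x) > 0"
    using sol \<open>x \<in> topspace T\<close> compact_immersed_surface_in_HxR
    by (auto simp: translating_soliton_def HxR_def)
  ultimately show ?thesis by (simp add: S proj_H2_def)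
qed

theorem proposition5p7:
  fixes T :: "'a topology" and f \<eta> :: "'a \<Rightarrow> pt"
    and \<gamma>1 \<gamma>2 S1 S2 :: "(real \<times> real) set"
  assumes "translating_soliton T f \<eta>"
    and "closed_halfplane \<gamma>1 S1" and "closed_halfplane \<gamma>2 S2"
    and "\<gamma>2 \<subseteq> S1" and "\<gamma>1 \<subseteq> S2"
    and "\<forall>x\<in>surface_boundary T f. proj_H2 (f x) \<in> S1 \<inter> S2"
  shows "\<forall>x\<in>topspace T. proj_H2 (f x) \<in> S1 \<inter> S2"
  using soliton_in_closed_halfplane[OF assms(1,2)] soliton_in_closed_halfplane[OF assms(1,3)] assms(6)
  by blast

end
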